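(* Let $(\mathcal{T},\Sigma)$ be a triangulated category and let $\mathcal{C}$ be an $(n-2)$-cluster tilting subcategory of $\mathcal{T}$ (for an integer $n\ge 4$) which is closed under $\Sigma^{n-2}$, and let $(\mathcal{C},\widehat{\Sigma})$, $\widehat{\Sigma}=\Sigma^{n-2}$, be the associated $n$-angulated category. Then there is a well-defined surjective group homomorphism $K_0(\mathcal{C})\to K_0(\mathcal{T})$ sending $[A]-[B]$ (computed in $K_0(\mathcal{C})$) to $[A]-[B]$ (computed in $K_0(\mathcal{T})$) for all objects $A,B$ of $\mathcal{C}$.
   Context: All categories are small. $(\mathcal{T},\Sigma)$ is a triangulated category (suspension $\Sigma$); $K_0(\mathcal{T})$ is its Grothendieck group: the free abelian group on isomorphism classes of objects modulo $\langle X\rangle-\langle Y\rangle+\langle Z\rangle$ for every triangle $X\to Y\to Z\to\Sigma X$; $[X]$ denotes the class of $X$. A full subcategory $\mathcal{C}\subseteq\mathcal{T}$ is contravariantly (resp. covariantly) finite if every object of $\mathcal{T}$ has a right (resp. left) $\mathcal{C}$-approximation, where a right $\mathcal{C}$-approximation of $X$ is a morphism $f:C\to X$ with $C\in\mathcal{C}$ such that every morphism $C'\to X$ with $C'\in\mathcal{C}$ factors through $f$ (left approximations dually); functorially finite means both. For $t\ge 2$, $\mathcal{C}$ is $t$-cluster tilting if it is functorially finite and $\mathcal{C}=\{A\in\mathcal{T}\mid \operatorname{Hom}_{\mathcal{T}}(A,\Sigma^iC)=0\text{ for }1\le i\le t-1,\ C\in\mathcal{C}\}=\{B\in\mathcal{T}\mid\operatorname{Hom}_{\mathcal{T}}(\Sigma^iC,B)=0\text{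 for }1\le i\le t-1,\ C\in\mathcal{C}\}$. If $\mathcal{C}$ is $(n-2)$-cluster tilting and closed under $\widehat{\Sigma}=\Sigma^{n-2}$, declare a sequence $A_1\xrightarrow{\alpha_1}A_2\to\cdots\xrightarrow{\alpha_{n-1}}A_n\xrightarrow{\alpha_n}\widehat{\Sigma}A_1$ in $\mathcal{C}$ to be an $n$-angle if there exist objects $X_1,\dots,X_{n-3}$ of $\mathcal{T}$ and triangles in $\mathcal{T}$: $A_1\xrightarrow{\alpha_1}A_2\xrightarrow{f_1}X_1\xrightarrow{\partial_{n-2}}\Sigma A_1$; $X_{i-1}\xrightarrow{g_{i-1}}A_{i+1}\xrightarrow{f_i}X_i\xrightarrow{\partial_{n-1-i}}\Sigma X_{i-1}$ for $2\le i\le n-3$; and $X_{n-3}\xrightarrow{g_{n-3}}A_{n-1}\xrightarrow{\alpha_{n-1}}A_n\xrightarrow{\partial_1}\Sigma X_{n-3}$, such that $\alpha_{i+1}=g_i\circ f_i$ for $1\le i\le n-3$ and $\alpha_n=\Sigma^{n-3}\partial_{n-2}\circ\Sigma^{n-4}\partial_{n-3}\circ\cdots\circ\partial_1$. By Geiss–Keller–Oppermann, $(\mathcal{C},\widehat{\Sigma})$ with these $n$-angles is an $n$-angulated category. Grothendieck group of an $n$-angulated category $(\mathcal{C},\widehat\Sigma)$: let $F(\mathcal{C})$ be the free abelian group on the isomorphism classes $\langle A\rangle$ of objects; for an $n$-angle $A_\bullet$ put $\chi(A_\bullet)=\sum_{i=1}^n(-1)^{i+1}\langle A_i\rangle$;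 $R(\mathcal{C})$ is the subgroup generated by all $\chi(A_\bullet)$, together with $\langle 0\rangle$ when $n$ is even; $K_0(\mathcal{C})=F(\mathcal{C})/R(\mathcal{C})$ with $[A]$ the class of $\langle A\rangle$. (Every element of $K_0(\mathcal{C})$ has the form $[A]-[B]$.) *)

theory Defs
  imports "HOL-Algebra.Coset" "HOL-Algebra.Generated_Groups"
begin

text \<open>Objects have type 'o, morphisms type 'm. src/tgt give domain/codomain,
  cmp g f is the composite g after f, madd/mzero/mneg the additive structure on
  Hom-sets, susp/suspm the suspension functor on objects/morphisms, and dtri the
  class of distinguished triangles (f,g,h) : X -> Y -> Z -> susp X.\<close>

record ('o,'m) tricat =
  obj   :: "'o set"
  mor   :: "'m set"
  src   :: "'m \<Rightarrow> 'o"
  tgt   :: "'m \<Rightarrow> 'o"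
  cmp   :: "'m \<Rightarrow> 'm \<Rightarrow> 'm"
  idm   :: "'o \<Rightarrow> 'm"
  madd  :: "'m \<Rightarrow> 'm \<Rightarrow> 'm"
  mzero :: "'o \<Rightarrow> 'o \<Rightarrow> 'm"
  mneg  :: "'m \<Rightarrow> 'm"
  susp  :: "'o \<Rightarrow> 'o"
  suspm :: "'m \<Rightarrow> 'm"
  dtri  :: "('m \<times> 'm \<times> 'm) set"

definition thom :: "('o,'m) tricat \<Rightarrow> 'o \<Rightarrow> 'o \<Rightarrow> 'm set" where
  "thom T X Y = {f \<in> mor T. src T f = X \<and> tgt T f = Y}"

definition is_category :: "('o,'m) tricat \<Rightarrow> bool" where
  "is_category T \<longleftrightarrow>
     (\<forall>f\<in>mor T. src T f \<in> obj T \<and> tgt T f \<in> obj T) \<and>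
     (\<forall>X\<in>obj T. idm T X \<in> thom T X X) \<and>
     (\<forall>X\<in>obj T. \<forall>Y\<in>obj T. \<forall>Z\<in>obj T. \<forall>f\<in>thom T X Y. \<forall>g\<in>thom T Y Z.
        cmp T g f \<in> thom T X Z) \<and>
     (\<forall>f\<in>mor T. \<forall>g\<in>mor T. \<forall>h\<in>mor T. tgt T f = src T g \<longrightarrow> tgt T g = src T h \<longrightarrow>
        cmp T h (cmp T g f) = cmp T (cmp T h g) f) \<and>
     (\<forall>f\<in>mor T. cmp T (idm T (tgt T f)) f = f \<and> cmp T f (idm T (src T f)) = f)"

definition is_iso :: "('o,'m) tricat \<Rightarrow> 'm \<Rightarrow> bool" where
  "is_iso T f \<longleftrightarrow> f \<in> mor T \<and>
     (\<exists>g\<in>thom T (tgt T f) (src T f). cmp T g f = idm T (src T f) \<and> cmp T f g = idm T (tgt T f))"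

definition isomorphic :: "('o,'m) tricat \<Rightarrow> 'o \<Rightarrow> 'o \<Rightarrow> bool" where
  "isomorphic T X Y \<longleftrightarrow> (\<exists>f\<in>thom T X Y. is_iso T f)"

definition is_preadditive :: "('o,'m) tricat \<Rightarrow> bool" where
  "is_preadditive T \<longleftrightarrow>
     (\<forall>X\<in>obj T. \<forall>Y\<in>obj T.
        mzero T X Y \<in> thom T X Y \<and>
        (\<forall>f\<in>thom T X Y. mneg T f \<in> thom T X Y \<and>
            madd T f (mzero T X Y) = f \<and> madd T f (mneg T f) = mzero T X Y) \<and>
        (\<forall>f\<in>thom T X Y. \<forall>g\<in>thom T X Y. madd T f g \<in> thom T X Y \<and> madd T f g = madd T g f) \<and>
        (\<forall>f\<in>thom T X Y. \<forall>g\<in>thom T X Y. \<forall>h\<in>thom T X Y.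
            madd T (madd T f g) h = madd T f (madd T g h))) \<and>
     (\<forall>X\<in>obj T. \<forall>Y\<in>obj T. \<forall>Z\<in>obj T.
        (\<forall>f\<in>thom T X Y. \<forall>g\<in>thom T Y Z. \<forall>g'\<in>thom T Y Z.
            cmp T (madd T g g') f = madd T (cmp T g f) (cmp T g' f)) \<and>
        (\<forall>f\<in>thom T X Y. \<forall>f'\<in>thom T X Y. \<forall>g\<in>thom T Y Z.
            cmp T g (madd T f f') = madd T (cmp T g f) (cmp T g f')))"

definition is_zero_obj :: "('o,'m) tricat \<Rightarrow> 'o \<Rightarrow> bool" where
  "is_zero_obj T Z \<longleftrightarrow> Z \<in> obj T \<and>
     (\<forall>X\<in>obj T. thom T Z X = {mzero T Z X} \<and> thom T X Z = {mzero T X Z})"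

definition is_additive :: "('o,'m) tricat \<Rightarrow> bool" where
  "is_additive T \<longleftrightarrow> is_category T \<and> is_preadditive T \<and> (\<exists>Z. is_zero_obj T Z) \<and>
     (\<forall>X\<in>obj T. \<forall>Y\<in>obj T. \<exists>P\<in>obj T.
        \<exists>p1\<in>thom T P X. \<exists>p2\<in>thom T P Y. \<exists>i1\<in>thom T X P. \<exists>i2\<in>thom T Y P.
          cmp T p1 i1 = idm T X \<and> cmp T p2 i2 = idm T Y \<and>
          cmp T p1 i2 = mzero T Y X \<and> cmp T p2 i1 = mzero T X Y \<and>
          madd T (cmp T i1 p1) (cmp T i2 p2) = idm T P)"

text \<open>The suspension is an additive auto-equivalence.\<close>
definition susp_ok :: "('o,'m) tricat \<Rightarrow> bool" where
  "susp_ok T \<longleftrightarrow>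
     (\<forall>X\<in>obj T. susp T X \<in> obj T \<and> suspm T (idm T X) = idm T (susp T X)) \<and>
     (\<forall>X\<in>obj T. \<forall>Y\<in>obj T.
        bij_betw (suspm T) (thom T X Y) (thom T (susp T X) (susp T Y)) \<and>
        (\<forall>f\<in>thom T X Y. \<forall>f'\<in>thom T X Y. suspm T (madd T f f') = madd T (suspm T f) (suspm T f'))) \<and>
     (\<forall>X\<in>obj T. \<forall>Y\<in>obj T. \<forall>Z\<in>obj T. \<forall>f\<in>thom T X Y. \<forall>g\<in>thom T Y Z.
        suspm T (cmp T g f) = cmp T (suspm T g) (suspm T f)) \<and>
     (\<forall>Y\<in>obj T. \<exists>X\<in>obj T. isomorphic T (susp T X) Y)"

definition is_triangle :: "('o,'m) tricat \<Rightarrow> 'm \<times> 'm \<times> 'm \<Rightarrow> bool" where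
  "is_triangle T t \<longleftrightarrow> (case t of (f,g,h) \<Rightarrow>
     (\<exists>X\<in>obj T. \<exists>Y\<in>obj T. \<exists>Z\<in>obj T.
        f \<in> thom T X Y \<and> g \<in> thom T Y Z \<and> h \<in> thom T Z (susp T X)))"

definition is_triangulated :: "('o,'m) tricat \<Rightarrow> bool" where
  "is_triangulated T \<longleftrightarrow> is_additive T \<and> susp_ok T \<and>
     (\<forall>t\<in>dtri T. is_triangle T t) \<and>
     \<comment> \<open>TR1: closure under isomorphisms of triangles\<close>
     (\<forall>f g h f' g' h' a b c. (f,g,h) \<in> dtri T \<and> is_triangle T (f',g',h') \<and>
        a \<in> thom T (src T f) (src T f') \<and> b \<in> thom T (tgt T f) (tgt T f') \<and>
        c \<in> thom T (tgt T g) (tgt T g') \<and> is_iso T a \<and> is_iso T b \<and> is_iso T c \<and>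
        cmp T f' a = cmp T b f \<and> cmp T g' b = cmp T c g \<and>
        cmp T h' c = cmp T (suspm T a) h
        \<longrightarrow> (f',g',h') \<in> dtri T) \<and>
     \<comment> \<open>TR1: identity triangles\<close>
     (\<forall>X\<in>obj T. \<forall>Z. is_zero_obj T Z \<longrightarrow>
        (idm T X, mzero T X Z, mzero T Z (susp T X)) \<in> dtri T) \<and>
     \<comment> \<open>TR1: every morphism embeds in a distinguished triangle\<close>
     (\<forall>f\<in>mor T. \<exists>g h. (f,g,h) \<in> dtri T) \<and>
     \<comment> \<open>TR2: rotation\<close>
     (\<forall>f g h. is_triangle T (f,g,h) \<longrightarrow>
        ((f,g,h) \<in> dtri T \<longleftrightarrow> (g, h, mneg T (suspm T f)) \<in> dtri T)) \<and>
     \<comment> \<open>TR3: completion of morphisms of triangles\<close>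
     (\<forall>f g h f' g' h' a b. (f,g,h) \<in> dtri T \<and> (f',g',h') \<in> dtri T \<and>
        a \<in> thom T (src T f) (src T f') \<and> b \<in> thom T (tgt T f) (tgt T f') \<and>
        cmp T b f = cmp T f' a
        \<longrightarrow> (\<exists>c\<in>thom T (tgt T g) (tgt T g').
               cmp T c g = cmp T g' b \<and> cmp T h' c = cmp T (suspm T a) h)) \<and>
     \<comment> \<open>TR4: octahedral axiom\<close>
     (\<forall>f u d g v e w k. (f,u,d) \<in> dtri T \<and> (g,v,e) \<in> dtri T \<and>
        (cmp T g f, w, k) \<in> dtri T \<and> tgt T f = src T g
        \<longrightarrow> (\<exists>a\<in>thom T (tgt T u) (tgt T w). \<exists>b\<in>thom T (tgt T w) (tgt T v).
               (a, b, cmp T (suspm T u) e) \<in> dtri T \<and>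
               cmp T a u = cmp T w g \<and> cmp T k a = d \<and>
               cmp T b w = v \<and> cmp T e b = cmp T (suspm T f) k))"

definition right_approx :: "('o,'m) tricat \<Rightarrow> 'o set \<Rightarrow> 'o \<Rightarrow> 'm \<Rightarrow> bool" where
  "right_approx T C X f \<longleftrightarrow> src T f \<in> C \<and> f \<in> thom T (src T f) X \<and>
     (\<forall>C'\<in>C. \<forall>h\<in>thom T C' X. \<exists>k\<in>thom T C' (src T f). cmp T f k = h)"

definition left_approx :: "('o,'m) tricat \<Rightarrow> 'o set \<Rightarrow> 'o \<Rightarrow> 'm \<Rightarrow> bool" where
  "left_approx T C X f \<longleftrightarrow> tgt T f \<in> C \<and> f \<in> thom T X (tgt T f) \<and>
     (\<forall>C'\<in>C. \<forall>h\<in>thom T X C'. \<exists>k\<in>thom T (tgt T f) C'. cmp T k f = h)"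

definition functorially_finite :: "('o,'m) tricat \<Rightarrow> 'o set \<Rightarrow> bool" where
  "functorially_finite T C \<longleftrightarrow> C \<subseteq> obj T \<and>
     (\<forall>X\<in>obj T. \<exists>f. right_approx T C X f) \<and> (\<forall>X\<in>obj T. \<exists>f. left_approx T C X f)"

definition cluster_tilting :: "nat \<Rightarrow> ('o,'m) tricat \<Rightarrow> 'o set \<Rightarrow> bool" where
  "cluster_tilting t T C \<longleftrightarrow> functorially_finite T C \<and>
     C = {A\<in>obj T. \<forall>i. 1 \<le> i \<and> i \<le> t - 1 \<longrightarrow> (\<forall>B\<in>C.
            thom T A ((susp T ^^ i) B) = {mzero T A ((susp T ^^ i) B)})} \<and>
     C = {A\<in>obj T. \<forall>i. 1 \<le> i \<and> i \<le> t - 1 \<longrightarrow> (\<forall>B\<in>C.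
            thom T ((susp T ^^ i) B) A = {mzero T ((susp T ^^ i) B) A})}"

fun dcomp :: "('o,'m) tricat \<Rightarrow> (nat \<Rightarrow> 'm) \<Rightarrow> nat \<Rightarrow> 'm" where
  "dcomp T d 0 = undefined"
| "dcomp T d (Suc 0) = d 1"
| "dcomp T d (Suc (Suc k)) = cmp T ((suspm T ^^ Suc k) (d (Suc (Suc k)))) (dcomp T d (Suc k))"

definition is_n_angle :: "nat \<Rightarrow> ('o,'m) tricat \<Rightarrow> 'o set \<Rightarrow> (nat \<Rightarrow> 'o) \<Rightarrow> (nat \<Rightarrow> 'm) \<Rightarrow> bool" where
  "is_n_angle n T C A \<alpha> \<longleftrightarrow>
     (\<forall>i. 1 \<le> i \<and> i \<le> n \<longrightarrow> A i \<in> C) \<and>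
     (\<forall>i. 1 \<le> i \<and> i \<le> n - 1 \<longrightarrow> \<alpha> i \<in> thom T (A i) (A (i+1))) \<and>
     \<alpha> n \<in> thom T (A n) ((susp T ^^ (n-2)) (A 1)) \<and>
     (\<exists>X f g d.
        (\<forall>i. 1 \<le> i \<and> i \<le> n - 3 \<longrightarrow> X i \<in> obj T \<and>
              f i \<in> thom T (A (i+1)) (X i) \<and> g i \<in> thom T (X i) (A (i+2))) \<and>
        (\<alpha> 1, f 1, d (n-2)) \<in> dtri T \<and>
        (\<forall>i. 2 \<le> i \<and> i \<le> n - 3 \<longrightarrow> (g (i-1), f i, d (n-1-i)) \<in> dtri T) \<and>
        (g (n-3), \<alpha> (n-1), d 1) \<in> dtri T \<and>
        (\<forall>i. 1 \<le> i \<and> i \<le> n - 3 \<longrightarrow> \<alpha> (i+1) = cmp T (g i) (f i)) \<and>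
        \<alpha> n = dcomp T d (n-2))"

text \<open>Free abelian group on the objects of S (finitely supported integer functions).
  Isomorphism classes are obtained by adding the relations <X> - <Y> for X iso Y.\<close>
definition free_ab :: "'o set \<Rightarrow> ('o \<Rightarrow> int) monoid" where
  "free_ab S = \<lparr>carrier = {c. finite {x. c x \<noteq> 0} \<and> (\<forall>x. x \<notin> S \<longrightarrow> c x = 0)},
                mult = (\<lambda>c c' x. c x + c' x), one = (\<lambda>x. 0)\<rparr>"

definition gen :: "'o \<Rightarrow> 'o \<Rightarrow> int" where
  "gen A = (\<lambda>x. if x = A then 1 else 0)"

definition iso_rels :: "('o,'m) tricat \<Rightarrow> 'o set \<Rightarrow> ('o \<Rightarrow> int) set" where
  "iso_rels T S = {(\<lambda>x. gen X x - gen Y x) | X Y. X \<in> S \<and> Y \<in> S \<and> isomorphic T X Y}"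

definition tri_rels :: "('o,'m) tricat \<Rightarrow> ('o \<Rightarrow> int) set" where
  "tri_rels T = {(\<lambda>x. gen (src T f) x - gen (tgt T f) x + gen (tgt T g) x) | f g h. (f,g,h) \<in> dtri T}"

definition K0_tri :: "('o,'m) tricat \<Rightarrow> ('o \<Rightarrow> int) set monoid" where
  "K0_tri T = free_ab (obj T) Mod generate (free_ab (obj T)) (iso_rels T (obj T) \<union> tri_rels T)"

definition angle_rels :: "nat \<Rightarrow> ('o,'m) tricat \<Rightarrow> 'o set \<Rightarrow> ('o \<Rightarrow> int) set" where
  "angle_rels n T C = {(\<lambda>x. \<Sum>i=1..n. (-1)^(i+1) * gen (A i) x) | A \<alpha>. is_n_angle n T C A \<alpha>}
     \<union> (if even n then {gen Z | Z. Z \<in> C \<and> is_zero_obj T Z} else {})"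

definition K0_ang :: "nat \<Rightarrow> ('o,'m) tricat \<Rightarrow> 'o set \<Rightarrow> ('o \<Rightarrow> int) set monoid" where
  "K0_ang n T C = free_ab C Mod generate (free_ab C) (iso_rels T C \<union> angle_rels n T C)"

definition cls_tri :: "('o,'m) tricat \<Rightarrow> 'o \<Rightarrow> ('o \<Rightarrow> int) set" where
  "cls_tri T A = generate (free_ab (obj T)) (iso_rels T (obj T) \<union> tri_rels T) #>\<^bsub>free_ab (obj T)\<^esub> gen A"

definition cls_ang :: "nat \<Rightarrow> ('o,'m) tricat \<Rightarrow> 'o set \<Rightarrow> 'o \<Rightarrow> ('o \<Rightarrow> int) set" where
  "cls_ang n T C A = generate (free_ab C) (iso_rels T C \<union> angle_rels n T C) #>\<^bsub>free_ab C\<^esub> gen A"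

end

theory Submission
  imports Defs
begin

text \<open>
  A left \<open>C\<close>-approximation \<open>X \<rightarrow> C\<^sub>0\<close> completes to a triangle \<open>X \<rightarrow> C\<^sub>0 \<rightarrow> X\<^sub>1 \<rightarrow> \<Sigma>X\<close>, and
  \<open>Hom(X\<^sub>1, \<Sigma>\<^sup>iC) = 0\<close> holds for one more degree \<open>i\<close> than \<open>Hom(X, \<Sigma>\<^sup>iC) = 0\<close>. Iterating
  \<open>n - 3\<close> times lands in \<open>C\<close> by cluster tilting, so modulo triangle relations every \<open>[X]\<close>
  is an integer combination of classes of objects of \<open>C\<close>: the map \<open>K\<^sub>0(C) \<rightarrow> K\<^sub>0(T)\<close> induced
  by the inclusion is onto. It is well defined because an \<open>n\<close>-angle is spliced together from
  \<open>n - 2\<close> triangles, along which its alternating sum telescopes into a sum of triangle relations.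
\<close>

section \<open>Free abelian groups\<close>

lemma free_ab_carrier_iff:
  "c \<in> carrier (free_ab S) \<longleftrightarrow> finite {x. c x \<noteq> 0} \<and> (\<forall>x. x \<notin> S \<longrightarrow> c x = 0)"
  by (simp add: free_ab_def)

lemma free_ab_mult [simp]: "a \<otimes>\<^bsub>free_ab S\<^esub> b = (\<lambda>x. a x + b x)"
  by (simp add: free_ab_def)

lemma free_ab_one [simp]: "\<one>\<^bsub>free_ab S\<^esub> = (\<lambda>x. 0)"
  by (simp add: free_ab_def)

lemma free_ab_add_closed:
  assumes "a \<in> carrier (free_ab S)" "b \<in> carrier (free_ab S)"
  shows "(\<lambda>x. a x + b x) \<in> carrier (free_ab S)"
proof -
  have "{x. a x + b x \<noteq> 0} \<subseteq> {x. a x \<noteq> 0} \<union> {x. b x \<noteq> 0}" by auto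
  then show ?thesis using assms unfolding free_ab_carrier_iff by (auto intro: finite_subset)
qed

lemma free_ab_neg_closed: "a \<in> carrier (free_ab S) \<Longrightarrow> (\<lambda>x. - a x) \<in> carrier (free_ab S)"
  unfolding free_ab_carrier_iff by auto

lemma free_ab_mono: "S \<subseteq> S' \<Longrightarrow> carrier (free_ab S) \<subseteq> carrier (free_ab S')"
  unfolding subset_iff free_ab_carrier_iff by blast

lemma gen_in_free_ab: "A \<in> S \<Longrightarrow> gen A \<in> carrier (free_ab S)"
  unfolding free_ab_carrier_iff gen_def by auto

lemma comm_group_free_ab: "comm_group (free_ab S)"
proof (rule comm_groupI)
  fix x assume "x \<in> carrier (free_ab S)"
  then show "\<exists>y\<in>carrier (free_ab S). y \<otimes>\<^bsub>free_ab S\<^esub> x = \<one>\<^bsub>free_ab S\<^esub>"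
    by (intro bexI[of _ "\<lambda>z. - x z"]) (auto intro: free_ab_neg_closed)
qed (simp_all add: free_ab_add_closed, auto simp: free_ab_carrier_iff)

lemma group_free_ab: "group (free_ab S)"
  using comm_group_free_ab comm_group.axioms(2) by blast

lemma free_ab_inv:
  "c \<in> carrier (free_ab S) \<Longrightarrow> inv\<^bsub>free_ab S\<^esub> c = (\<lambda>x. - c x)"
  by (intro group.inv_equality[OF group_free_ab]) (auto intro: free_ab_neg_closed)

lemma free_ab_subgroup_add:
  "subgroup H (free_ab S) \<Longrightarrow> a \<in> H \<Longrightarrow> b \<in> H \<Longrightarrow> (\<lambda>x. a x + b x) \<in> H"
  using subgroup.m_closed[of H "free_ab S" a b] by simp

lemma free_ab_subgroup_neg:
  assumes "subgroup H (free_ab S)" "a \<in> H"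
  shows "(\<lambda>x. - a x) \<in> H"
  using subgroup.m_inv_closed[OF assms] free_ab_inv[OF subgroup.mem_carrier[OF assms]] by simp

lemma free_ab_subgroup_diff:
  "subgroup H (free_ab S) \<Longrightarrow> a \<in> H \<Longrightarrow> b \<in> H \<Longrightarrow> (\<lambda>x. a x - b x) \<in> H"
  using free_ab_subgroup_add[of H S a "\<lambda>x. - b x"] free_ab_subgroup_neg[of H S b] by simp

lemma free_ab_subgroup_smult:
  assumes H: "subgroup H (free_ab S)" and a: "a \<in> H"
  shows "(\<lambda>x. k * a x) \<in> H"
proof -
  have nat: "(\<lambda>x. int m * a x) \<in> H" for m
  proof (induction m)
    case 0
    show ?case using subgroup.one_closed[OF H] by simp
  next
    case (Suc m)
    then show ?case using free_ab_subgroup_add[OF H Suc a] by (simp add: algebra_simps)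
  qed
  show ?thesis
  proof (cases "k \<ge> 0")
    case True
    then show ?thesis using nat[of "nat k"] by simp
  next
    case False
    then show ?thesis using free_ab_subgroup_neg[OF H nat[of "nat (- k)"]] by simp
  qed
qed

lemma free_ab_subgroup_sum:
  assumes H: "subgroup H (free_ab S)"
  shows "finite D \<Longrightarrow> (\<And>y. y \<in> D \<Longrightarrow> a y \<in> H) \<Longrightarrow> (\<lambda>x. \<Sum>y\<in>D. a y x) \<in> H"
proof (induction D rule: finite_induct)
  case empty
  show ?case using subgroup.one_closed[OF H] by simp
next
  case (insert y D)
  then show ?case using free_ab_subgroup_add[OF H, of "a y"] by simp
qed

lemma free_ab_as_sum:
  assumes "c \<in> carrier (free_ab S)"
  shows "c = (\<lambda>x. \<Sum>y\<in>{y. c y \<noteq> 0}. c y * gen y x)"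
proof
  fix x
  have "finite {y. c y \<noteq> 0}" using assms unfolding free_ab_carrier_iff by blast
  then have "(\<Sum>y\<in>{y. c y \<noteq> 0}. c y * gen y x) = (if c x \<noteq> 0 then c x else 0)"
    by (simp add: gen_def if_distrib sum.delta' cong: if_cong)
  then show "c x = (\<Sum>y\<in>{y. c y \<noteq> 0}. c y * gen y x)" by simp
qed

lemma carrier_free_ab_subset_generate: "carrier (free_ab S) \<subseteq> generate (free_ab S) (gen ` S)"
proof
  fix c assume c: "c \<in> carrier (free_ab S)"
  have sg: "subgroup (generate (free_ab S) (gen ` S)) (free_ab S)"
    by (intro group.generate_is_subgroup[OF group_free_ab]) (auto intro: gen_in_free_ab)
  have "(\<lambda>x. \<Sum>y\<in>{y. c y \<noteq> 0}. c y * gen y x) \<in> generate (free_ab S) (gen ` S)"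
  proof (rule free_ab_subgroup_sum[OF sg])
    show "finite {y. c y \<noteq> 0}" using c unfolding free_ab_carrier_iff by blast
    fix y assume "y \<in> {y. c y \<noteq> 0}"
    then have "gen y \<in> generate (free_ab S) (gen ` S)"
      using c unfolding free_ab_carrier_iff by (auto intro: generate.incl)
    then show "(\<lambda>x. c y * gen y x) \<in> generate (free_ab S) (gen ` S)"
      by (rule free_ab_subgroup_smult[OF sg])
  qed
  then show "c \<in> generate (free_ab S) (gen ` S)" using free_ab_as_sum[OF c] by simp
qed

lemma free_ab_rcos_eq_iff:
  assumes H: "subgroup H (free_ab S)" and a: "a \<in> carrier (free_ab S)" and b: "b \<in> carrier (free_ab S)"
  shows "H #>\<^bsub>free_ab S\<^esub> a = H #>\<^bsub>free_ab S\<^esub> b \<longleftrightarrow> (\<lambda>x. a x - b x) \<in> H"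
proof -
  interpret group "free_ab S" by (rule group_free_ab)
  have "H #>\<^bsub>free_ab S\<^esub> a = H #>\<^bsub>free_ab S\<^esub> b \<longleftrightarrow> a \<in> H #>\<^bsub>free_ab S\<^esub> b"
    using repr_independence[OF _ b H] repr_independenceD[OF H a] by metis
  also have "\<dots> \<longleftrightarrow> (\<lambda>x. a x - b x) \<in> H"
    using subgroup.rcos_module[OF H is_group b a] free_ab_inv[OF b] by simp
  finally show ?thesis .
qed

lemma generate_free_ab_subset:
  assumes "S \<subseteq> S'" and R: "R \<subseteq> carrier (free_ab S)" and H: "subgroup H (free_ab S')" and "R \<subseteq> H"
  shows "generate (free_ab S) R \<subseteq> H"
proof
  fix h assume "h \<in> generate (free_ab S) R"
  then show "h \<in> H"
  proof induction
    case one
    show ?case using subgroup.one_closed[OF H] by simp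
  next
    case (incl h)
    then show ?case using \<open>R \<subseteq> H\<close> by blast
  next
    case (inv h)
    then have h: "h \<in> carrier (free_ab S)" "h \<in> H" using R \<open>R \<subseteq> H\<close> by auto
    show ?case using free_ab_inv[OF h(1)] free_ab_subgroup_neg[OF H h(2)] by simp
  next
    case (eng h1 h2)
    then show ?case using free_ab_subgroup_add[OF H] by simp
  qed
qed

lemma subgroup_free_ab_congruent:
  assumes H: "subgroup H (free_ab S)"
  shows "subgroup {c \<in> carrier (free_ab S). \<exists>d\<in>carrier (free_ab C). (\<lambda>x. c x - d x) \<in> H} (free_ab S)"
    (is "subgroup ?Q _")
proof (rule group.subgroupI[OF group_free_ab])
  show "?Q \<subseteq> carrier (free_ab S)" by blast
  have "(\<lambda>x. 0) \<in> ?Q"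
    unfolding mem_Collect_eq using subgroup.one_closed[OF H]
    by (intro CollectI conjI bexI[of _ "\<lambda>x. 0"]) (simp_all add: free_ab_carrier_iff)
  then show "?Q \<noteq> {}" by blast
next
  fix a assume "a \<in> ?Q"
  then obtain d where a: "a \<in> carrier (free_ab S)" and d: "d \<in> carrier (free_ab C)"
    and ad: "(\<lambda>x. a x - d x) \<in> H"
    unfolding mem_Collect_eq by blast
  have "(\<lambda>x. - a x - - d x) \<in> H"
    using free_ab_subgroup_neg[OF H ad] by simp
  then have "\<exists>d\<in>carrier (free_ab C). (\<lambda>x. - a x - d x) \<in> H"
    by (rule bexI[OF _ free_ab_neg_closed[OF d]])
  then show "inv\<^bsub>free_ab S\<^esub> a \<in> ?Q"
    unfolding mem_Collect_eq free_ab_inv[OF a] using free_ab_neg_closed[OF a] by simp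
next
  fix a b assume "a \<in> ?Q" "b \<in> ?Q"
  then obtain da db where a: "a \<in> carrier (free_ab S)" and da: "da \<in> carrier (free_ab C)"
    and ada: "(\<lambda>x. a x - da x) \<in> H" and b: "b \<in> carrier (free_ab S)"
    and db: "db \<in> carrier (free_ab C)" and bdb: "(\<lambda>x. b x - db x) \<in> H"
    unfolding mem_Collect_eq by blast
  have "(\<lambda>x. a x - da x + (b x - db x)) = (\<lambda>x. (a x + b x) - (da x + db x))"
    by (rule ext) simp
  then have "(\<lambda>x. (a x + b x) - (da x + db x)) \<in> H"
    using free_ab_subgroup_add[OF H ada bdb] by simp
  then have "\<exists>d\<in>carrier (free_ab C). (\<lambda>x. (a x + b x) - d x) \<in> H"
    by (rule bexI[OF _ free_ab_add_closed[OF da db]])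
  then show "a \<otimes>\<^bsub>free_ab S\<^esub> b \<in> ?Q"
    unfolding mem_Collect_eq free_ab_mult using free_ab_add_closed[OF a b] by simp
qed

lemma free_ab_congruent_if_generators:
  assumes H: "subgroup H (free_ab S)"
    and gens: "\<And>X. X \<in> S \<Longrightarrow> \<exists>d\<in>carrier (free_ab C). (\<lambda>x. gen X x - d x) \<in> H"
    and c: "c \<in> carrier (free_ab S)"
  shows "\<exists>d\<in>carrier (free_ab C). (\<lambda>x. c x - d x) \<in> H"
proof -
  define Q where "Q = {c \<in> carrier (free_ab S). \<exists>d\<in>carrier (free_ab C). (\<lambda>x. c x - d x) \<in> H}"
  have "gen ` S \<subseteq> Q"
  proof
    fix g assume "g \<in> gen ` S"
    then obtain X where "X \<in> S" "g = gen X" by blast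
    then show "g \<in> Q" unfolding Q_def using gens gen_in_free_ab by simp
  qed
  then have "generate (free_ab S) (gen ` S) \<subseteq> Q"
    using group.generate_subgroup_incl[OF group_free_ab] subgroup_free_ab_congruent[OF H] unfolding Q_def by blast
  then have "c \<in> Q" using carrier_free_ab_subset_generate c by blast
  then show ?thesis unfolding Q_def by simp
qed

lemma free_ab_Mod_diff:
  assumes H: "subgroup H (free_ab S)" and a: "a \<in> carrier (free_ab S)" and b: "b \<in> carrier (free_ab S)"
  shows "(H #>\<^bsub>free_ab S\<^esub> a) \<otimes>\<^bsub>free_ab S Mod H\<^esub> inv\<^bsub>free_ab S Mod H\<^esub> (H #>\<^bsub>free_ab S\<^esub> b)
    = H #>\<^bsub>free_ab S\<^esub> (\<lambda>x. a x - b x)"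
proof -
  have N: "H \<lhd> free_ab S" using comm_group.subgroup_imp_normal[OF comm_group_free_ab H] .
  have "inv\<^bsub>free_ab S Mod H\<^esub> (H #>\<^bsub>free_ab S\<^esub> b) = H #>\<^bsub>free_ab S\<^esub> (\<lambda>x. - b x)"
    using normal.inv_FactGroup[OF N] normal.rcos_inv[OF N b] b free_ab_inv[OF b]
    unfolding carrier_FactGroup by auto
  then show ?thesis
    using normal.rcos_sum[OF N a free_ab_neg_closed[OF b]] by (simp add: FactGroup_def)
qed

lemma free_ab_Mod_induced_hom:
  assumes "S \<subseteq> S'" and H: "subgroup H (free_ab S)" and H': "subgroup H' (free_ab S')" and "H \<subseteq> H'"
  obtains \<phi> where "\<phi> \<in> hom (free_ab S Mod H) (free_ab S' Mod H')"
    and "\<And>c. c \<in> carrier (free_ab S) \<Longrightarrow> \<phi> (H #>\<^bsub>free_ab S\<^esub> c) = H' #>\<^bsub>free_ab S'\<^esub> c"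
proof -
  have carr: "carrier (free_ab S) \<subseteq> carrier (free_ab S')" using free_ab_mono[OF \<open>S \<subseteq> S'\<close>] .
  have N: "H \<lhd> free_ab S" and N': "H' \<lhd> free_ab S'"
    using comm_group.subgroup_imp_normal[OF comm_group_free_ab] H H' by auto
  have "(\<lambda>c. H' #>\<^bsub>free_ab S'\<^esub> c) \<in> hom (free_ab S) (free_ab S' Mod H')"
  proof (rule homI)
    fix c assume "c \<in> carrier (free_ab S)"
    then show "H' #>\<^bsub>free_ab S'\<^esub> c \<in> carrier (free_ab S' Mod H')"
      unfolding carrier_FactGroup using carr by blast
  next
    fix a b assume "a \<in> carrier (free_ab S)" "b \<in> carrier (free_ab S)"
    then show "H' #>\<^bsub>free_ab S'\<^esub> (a \<otimes>\<^bsub>free_ab S\<^esub> b)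
        = (H' #>\<^bsub>free_ab S'\<^esub> a) \<otimes>\<^bsub>free_ab S' Mod H'\<^esub> (H' #>\<^bsub>free_ab S'\<^esub> b)"
      using normal.rcos_sum[OF N'] carr by (auto simp: FactGroup_def)
  qed
  moreover have "H' #>\<^bsub>free_ab S'\<^esub> a = H' #>\<^bsub>free_ab S'\<^esub> b"
    if "a \<in> carrier (free_ab S)" "b \<in> carrier (free_ab S)" "H #>\<^bsub>free_ab S\<^esub> a = H #>\<^bsub>free_ab S\<^esub> b" for a b
    using that free_ab_rcos_eq_iff[OF H] free_ab_rcos_eq_iff[OF H'] carr \<open>H \<subseteq> H'\<close> by blast
  ultimately show thesis using FactGroup_universal[OF _ N] that by blast
qed

lemma free_ab_Mod_induced_hom_onto:
  assumes "S \<subseteq> S'" and H': "subgroup H' (free_ab S')"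
    and \<phi>: "\<phi> \<in> hom (free_ab S Mod H) (free_ab S' Mod H')"
    and \<phi>_rcos: "\<And>c. c \<in> carrier (free_ab S) \<Longrightarrow> \<phi> (H #>\<^bsub>free_ab S\<^esub> c) = H' #>\<^bsub>free_ab S'\<^esub> c"
    and reps: "\<And>c. c \<in> carrier (free_ab S') \<Longrightarrow> \<exists>d\<in>carrier (free_ab S). (\<lambda>x. c x - d x) \<in> H'"
  shows "\<phi> ` carrier (free_ab S Mod H) = carrier (free_ab S' Mod H')"
proof
  show "\<phi> ` carrier (free_ab S Mod H) \<subseteq> carrier (free_ab S' Mod H')"
    using \<phi> hom_carrier by blast
next
  show "carrier (free_ab S' Mod H') \<subseteq> \<phi> ` carrier (free_ab S Mod H)"
  proof
    fix U assume "U \<in> carrier (free_ab S' Mod H')"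
    then obtain c where c: "c \<in> carrier (free_ab S')" and U: "U = H' #>\<^bsub>free_ab S'\<^esub> c"
      unfolding carrier_FactGroup by blast
    obtain d where d: "d \<in> carrier (free_ab S)" and cd: "(\<lambda>x. c x - d x) \<in> H'"
      using reps[OF c] by blast
    have "U = \<phi> (H #>\<^bsub>free_ab S\<^esub> d)"
      using U \<phi>_rcos[OF d] free_ab_rcos_eq_iff[OF H' c] cd d free_ab_mono[OF \<open>S \<subseteq> S'\<close>] by blast
    then show "U \<in> \<phi> ` carrier (free_ab S Mod H)"
      unfolding carrier_FactGroup using d by blast
  qed
qed

lemma free_ab_Mod_induced_hom_diff:
  assumes "S \<subseteq> S'" and H: "subgroup H (free_ab S)" and H': "subgroup H' (free_ab S')"
    and \<phi>_rcos: "\<And>c. c \<in> carrier (free_ab S) \<Longrightarrow> \<phi> (H #>\<^bsub>free_ab S\<^esub> c) = H' #>\<^bsub>free_ab S'\<^esub> c"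
    and a: "a \<in> carrier (free_ab S)" and b: "b \<in> carrier (free_ab S)"
  shows "\<phi> ((H #>\<^bsub>free_ab S\<^esub> a) \<otimes>\<^bsub>free_ab S Mod H\<^esub> inv\<^bsub>free_ab S Mod H\<^esub> (H #>\<^bsub>free_ab S\<^esub> b))
    = (H' #>\<^bsub>free_ab S'\<^esub> a) \<otimes>\<^bsub>free_ab S' Mod H'\<^esub> inv\<^bsub>free_ab S' Mod H'\<^esub> (H' #>\<^bsub>free_ab S'\<^esub> b)"
proof -
  have "a \<in> carrier (free_ab S')" "b \<in> carrier (free_ab S')"
    using a b free_ab_mono[OF \<open>S \<subseteq> S'\<close>] by auto
  moreover have "(\<lambda>x. a x - b x) \<in> carrier (free_ab S)"
    using free_ab_subgroup_diff[OF group.subgroup_self[OF group_free_ab] a b] .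
  ultimately show ?thesis
    using free_ab_Mod_diff[OF H a b] free_ab_Mod_diff[OF H'] \<phi>_rcos by simp
qed

section \<open>Triangulated categories\<close>

locale triangulated_category =
  fixes T :: "('o, 'm) tricat"
  assumes triangulated: "is_triangulated T"
begin

lemma is_category: "is_category T"
  and is_preadditive: "is_preadditive T"
  and susp_ok: "susp_ok T"
  and zero_obj_exists: "\<exists>Z. is_zero_obj T Z"
  using triangulated unfolding is_triangulated_def is_additive_def by auto

lemma dtri_is_triangle: "t \<in> dtri T \<Longrightarrow> is_triangle T t"
  using triangulated unfolding is_triangulated_def by (elim conjE) blast

lemma dtri_identity: "X \<in> obj T \<Longrightarrow> is_zero_obj T Z \<Longrightarrow> (idm T X, mzero T X Z, mzero T Z (susp T X)) \<in> dtri T"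
  using triangulated unfolding is_triangulated_def by (elim conjE) blast

lemma dtri_exists: "f \<in> mor T \<Longrightarrow> \<exists>g h. (f, g, h) \<in> dtri T"
  using triangulated unfolding is_triangulated_def by (elim conjE) blast

lemma dtri_rotate_iff:
  "is_triangle T (f, g, h) \<Longrightarrow> (f, g, h) \<in> dtri T \<longleftrightarrow> (g, h, mneg T (suspm T f)) \<in> dtri T"
  using triangulated unfolding is_triangulated_def by (elim conjE) blast

lemma dtri_morphism_completion:
  assumes "(f, g, h) \<in> dtri T" "(f', g', h') \<in> dtri T"
    "a \<in> thom T (src T f) (src T f')" "b \<in> thom T (tgt T f) (tgt T f')" "cmp T b f = cmp T f' a"
  shows "\<exists>c\<in>thom T (tgt T g) (tgt T g'). cmp T c g = cmp T g' b \<and> cmp T h' c = cmp T (suspm T a) h"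
  using triangulated unfolding is_triangulated_def by (elim conjE) (meson assms)

lemma thom_memD: "f \<in> thom T X Y \<Longrightarrow> f \<in> mor T \<and> src T f = X \<and> tgt T f = Y"
  by (simp add: thom_def)

lemma thom_objs: "f \<in> thom T X Y \<Longrightarrow> X \<in> obj T \<and> Y \<in> obj T"
  using is_category unfolding is_category_def thom_def by auto

lemma cmp_in_thom: "f \<in> thom T X Y \<Longrightarrow> g \<in> thom T Y Z \<Longrightarrow> cmp T g f \<in> thom T X Z"
  using is_category thom_objs unfolding is_category_def by blast

lemma idm_in_thom: "X \<in> obj T \<Longrightarrow> idm T X \<in> thom T X X"
  using is_category unfolding is_category_def by blast

lemma cmp_assoc:
  "f \<in> thom T X Y \<Longrightarrow> g \<in> thom T Y Z \<Longrightarrow> h \<in> thom T Z W \<Longrightarrow> cmp T h (cmp T g f) = cmp T (cmp T h g) f"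
  using is_category unfolding is_category_def thom_def by auto

lemma cmp_idm_left: "f \<in> thom T X Y \<Longrightarrow> cmp T (idm T Y) f = f"
  using is_category unfolding is_category_def thom_def by auto

lemma cmp_idm_right: "f \<in> thom T X Y \<Longrightarrow> cmp T f (idm T X) = f"
  using is_category unfolding is_category_def thom_def by auto

lemma mzero_in_thom: "X \<in> obj T \<Longrightarrow> Y \<in> obj T \<Longrightarrow> mzero T X Y \<in> thom T X Y"
  using is_preadditive unfolding is_preadditive_def by blast

lemma mneg_in_thom: "f \<in> thom T X Y \<Longrightarrow> mneg T f \<in> thom T X Y"
  using is_preadditive thom_objs unfolding is_preadditive_def by blast

lemma thom_eq_singleton_mzero:
  assumes "X \<in> obj T" "Y \<in> obj T" and "\<And>p. p \<in> thom T X Y \<Longrightarrow> p = mzero T X Y"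
  shows "thom T X Y = {mzero T X Y}"
proof
  show "thom T X Y \<subseteq> {mzero T X Y}"
  proof
    fix p assume "p \<in> thom T X Y"
    then have "p = mzero T X Y" by (rule assms(3))
    then show "p \<in> {mzero T X Y}" by simp
  qed
  show "{mzero T X Y} \<subseteq> thom T X Y" using mzero_in_thom[OF assms(1,2)] by simp
qed

lemma madd_mzero: "f \<in> thom T X Y \<Longrightarrow> madd T f (mzero T X Y) = f"
  using is_preadditive thom_objs unfolding is_preadditive_def by blast

lemma madd_mneg: "f \<in> thom T X Y \<Longrightarrow> madd T f (mneg T f) = mzero T X Y"
  using is_preadditive thom_objs unfolding is_preadditive_def by blast

lemma madd_assoc: "f \<in> thom T X Y \<Longrightarrow> g \<in> thom T X Y \<Longrightarrow> h \<in> thom T X Y \<Longrightarrow>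
    madd T (madd T f g) h = madd T f (madd T g h)"
  using is_preadditive thom_objs unfolding is_preadditive_def by blast

lemma cmp_madd_left: "f \<in> thom T X Y \<Longrightarrow> g \<in> thom T Y Z \<Longrightarrow> g' \<in> thom T Y Z \<Longrightarrow>
    cmp T (madd T g g') f = madd T (cmp T g f) (cmp T g' f)"
  using is_preadditive thom_objs unfolding is_preadditive_def by blast

lemma cmp_madd_right: "f \<in> thom T X Y \<Longrightarrow> f' \<in> thom T X Y \<Longrightarrow> g \<in> thom T Y Z \<Longrightarrow>
    cmp T g (madd T f f') = madd T (cmp T g f) (cmp T g f')"
  using is_preadditive thom_objs unfolding is_preadditive_def by blast

lemma madd_idem_eq_mzero:
  assumes p: "p \<in> thom T X Y" and "madd T p p = p"
  shows "p = mzero T X Y"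
proof -
  have "p = madd T (madd T p p) (mneg T p)"
    using madd_assoc[OF p p mneg_in_thom[OF p]] madd_mneg[OF p] madd_mzero[OF p] by simp
  also have "\<dots> = mzero T X Y" using \<open>madd T p p = p\<close> madd_mneg[OF p] by simp
  finally show ?thesis .
qed

lemma mzero_cmp:
  assumes f: "f \<in> thom T X Y" and "Z \<in> obj T"
  shows "cmp T (mzero T Y Z) f = mzero T X Z"
proof -
  have z: "mzero T Y Z \<in> thom T Y Z" using mzero_in_thom thom_objs[OF f] assms(2) by blast
  have "madd T (cmp T (mzero T Y Z) f) (cmp T (mzero T Y Z) f) = cmp T (mzero T Y Z) f"
    using cmp_madd_left[OF f z z] madd_mzero[OF z] by simp
  then show ?thesis using madd_idem_eq_mzero cmp_in_thom[OF f z] by blast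
qed

lemma cmp_mzero:
  assumes g: "g \<in> thom T Y Z" and "X \<in> obj T"
  shows "cmp T g (mzero T X Y) = mzero T X Z"
proof -
  have z: "mzero T X Y \<in> thom T X Y" using mzero_in_thom thom_objs[OF g] assms(2) by blast
  have "madd T (cmp T g (mzero T X Y)) (cmp T g (mzero T X Y)) = cmp T g (mzero T X Y)"
    using cmp_madd_right[OF z z g] madd_mzero[OF z] by simp
  then show ?thesis using madd_idem_eq_mzero cmp_in_thom[OF z g] by blast
qed

lemma cmp_eq_mzero_if_cmp_mneg:
  assumes a: "a \<in> thom T Y Z" and h: "h \<in> thom T X Y" and "cmp T (mneg T a) h = mzero T X Z"
  shows "cmp T a h = mzero T X Z"
proof -
  have "cmp T a h = madd T (cmp T a h) (cmp T (mneg T a) h)"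
    using assms(3) madd_mzero[OF cmp_in_thom[OF h a]] by simp
  also have "\<dots> = cmp T (madd T a (mneg T a)) h"
    using cmp_madd_left[OF h a mneg_in_thom[OF a]] by simp
  also have "\<dots> = mzero T X Z"
    using madd_mneg[OF a] mzero_cmp[OF h] thom_objs[OF a] by simp
  finally show ?thesis .
qed

lemma susp_in_obj: "X \<in> obj T \<Longrightarrow> susp T X \<in> obj T"
  using susp_ok unfolding susp_ok_def by blast

lemma susp_pow_in_obj: "X \<in> obj T \<Longrightarrow> (susp T ^^ i) X \<in> obj T"
  by (induction i) (auto simp: susp_in_obj)

lemma suspm_in_thom: "f \<in> thom T X Y \<Longrightarrow> suspm T f \<in> thom T (susp T X) (susp T Y)"
  using susp_ok thom_objs unfolding susp_ok_def bij_betw_def by blast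

lemma suspm_bij:
  "X \<in> obj T \<Longrightarrow> Y \<in> obj T \<Longrightarrow> bij_betw (suspm T) (thom T X Y) (thom T (susp T X) (susp T Y))"
  using susp_ok unfolding susp_ok_def by blast

lemma suspm_cmp:
  "f \<in> thom T X Y \<Longrightarrow> g \<in> thom T Y Z \<Longrightarrow> suspm T (cmp T g f) = cmp T (suspm T g) (suspm T f)"
  using susp_ok thom_objs unfolding susp_ok_def by blast

lemma susp_essentially_surj: "Y \<in> obj T \<Longrightarrow> \<exists>X\<in>obj T. isomorphic T (susp T X) Y"
  using susp_ok unfolding susp_ok_def by blast

lemma zero_obj_in_obj: "is_zero_obj T Z \<Longrightarrow> Z \<in> obj T"
  unfolding is_zero_obj_def by blast

lemma thom_from_zero_obj: "is_zero_obj T Z \<Longrightarrow> p \<in> thom T Z X \<Longrightarrow> p = mzero T Z X"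
  unfolding is_zero_obj_def using thom_objs by blast

lemma thom_to_zero_obj: "is_zero_obj T Z \<Longrightarrow> p \<in> thom T X Z \<Longrightarrow> p = mzero T X Z"
  unfolding is_zero_obj_def using thom_objs by blast

lemma zero_obj_if_iso:
  assumes Z: "is_zero_obj T Z" and \<psi>: "\<psi> \<in> thom T W Z" "is_iso T \<psi>"
  shows "is_zero_obj T W"
proof -
  obtain \<psi>' where \<psi>': "\<psi>' \<in> thom T Z W" "cmp T \<psi>' \<psi> = idm T W"
    using \<psi> thom_memD[OF \<psi>(1)] unfolding is_iso_def by auto
  have W: "W \<in> obj T" using thom_objs[OF \<psi>(1)] by blast
  have from_W: "p = mzero T W X" if p: "p \<in> thom T W X" for p X
  proof -
    have "q = cmp T (mzero T Z X) \<psi>" if q: "q \<in> thom T W X" for q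
    proof -
      have "q = cmp T q (cmp T \<psi>' \<psi>)" using \<psi>'(2) cmp_idm_right[OF q] by simp
      also have "\<dots> = cmp T (cmp T q \<psi>') \<psi>" using cmp_assoc[OF \<psi>(1) \<psi>'(1) q] .
      finally show ?thesis using thom_from_zero_obj[OF Z cmp_in_thom[OF \<psi>'(1) q]] by simp
    qed
    then show ?thesis using p mzero_in_thom[OF W] thom_objs[OF p] by metis
  qed
  have to_W: "p = mzero T X W" if p: "p \<in> thom T X W" for p X
  proof -
    have "q = cmp T \<psi>' (mzero T X Z)" if q: "q \<in> thom T X W" for q
    proof -
      have "q = cmp T (cmp T \<psi>' \<psi>) q" using \<psi>'(2) cmp_idm_left[OF q] by simp
      also have "\<dots> = cmp T \<psi>' (cmp T \<psi> q)" using cmp_assoc[OF q \<psi>(1) \<psi>'(1)] by simp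
      finally show ?thesis using thom_to_zero_obj[OF Z cmp_in_thom[OF q \<psi>(1)]] by simp
    qed
    then show ?thesis using p mzero_in_thom[OF _ W] thom_objs[OF p] by metis
  qed
  show ?thesis unfolding is_zero_obj_def using W from_W to_W mzero_in_thom by blast
qed

lemma susp_zero_obj_exists: "\<exists>V\<in>obj T. is_zero_obj T (susp T V)"
proof -
  obtain Z where Z: "is_zero_obj T Z" using zero_obj_exists by blast
  obtain V where V: "V \<in> obj T" "isomorphic T (susp T V) Z"
    using susp_essentially_surj[OF zero_obj_in_obj[OF Z]] by blast
  then show ?thesis using zero_obj_if_iso[OF Z] unfolding isomorphic_def by blast
qed

lemma dtri_thom:
  assumes "(f, g, h) \<in> dtri T"
  shows "f \<in> thom T (src T f) (tgt T f)" "g \<in> thom T (tgt T f) (tgt T g)"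
    "h \<in> thom T (tgt T g) (susp T (src T f))"
proof -
  from dtri_is_triangle[OF assms] obtain X Y Z where
    "f \<in> thom T X Y" "g \<in> thom T Y Z" "h \<in> thom T Z (susp T X)"
    unfolding is_triangle_def by auto
  then show "f \<in> thom T (src T f) (tgt T f)" "g \<in> thom T (tgt T f) (tgt T g)"
    "h \<in> thom T (tgt T g) (susp T (src T f))"
    by (simp_all add: thom_def)
qed

lemma dtri_rotate: "(f, g, h) \<in> dtri T \<Longrightarrow> (g, h, mneg T (suspm T f)) \<in> dtri T"
  using dtri_rotate_iff dtri_is_triangle by blast

lemma dtri_cmp_eq_mzero:
  assumes tri: "(f, g, h) \<in> dtri T"
  shows "cmp T g f = mzero T (src T f) (tgt T g)"
proof -
  obtain Z where Z: "is_zero_obj T Z" using zero_obj_exists by blast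
  let ?X = "src T f"
  have f: "f \<in> thom T ?X (tgt T f)" and g: "g \<in> thom T (tgt T f) (tgt T g)"
    using dtri_thom[OF tri] by auto
  have X: "?X \<in> obj T" and Y: "tgt T g \<in> obj T" using thom_objs f g by auto
  have id: "idm T ?X \<in> thom T ?X ?X" using idm_in_thom[OF X] .
  have z: "mzero T ?X Z \<in> thom T ?X Z" using mzero_in_thom[OF X zero_obj_in_obj[OF Z]] .
  \<comment> \<open>compare with the distinguished triangle \<open>X \<rightarrow> X \<rightarrow> 0 \<rightarrow> \<Sigma>X\<close> via \<open>(id, f)\<close>\<close>
  obtain c where c: "c \<in> thom T Z (tgt T g)" "cmp T c (mzero T ?X Z) = cmp T g f"
    using dtri_morphism_completion[OF dtri_identity[OF X Z] tri, of "idm T ?X" f] id f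
      cmp_idm_right[OF f] thom_memD[OF id] thom_memD[OF z] by auto
  have "c = mzero T Z (tgt T g)" using thom_from_zero_obj[OF Z c(1)] .
  then show ?thesis using c(2) mzero_cmp[OF z Y] by simp
qed

lemma dtri_hom_exact:
  assumes tri: "(f, g, h) \<in> dtri T" and u: "u \<in> thom T (tgt T f) W"
    and uf: "cmp T u f = mzero T (src T f) W"
  shows "\<exists>c\<in>thom T (tgt T g) W. cmp T c g = u"
proof -
  \<comment> \<open>compare with the distinguished triangle \<open>V \<rightarrow> W \<rightarrow> W \<rightarrow> \<Sigma>V\<close> with \<open>\<Sigma>V = 0\<close>\<close>
  obtain V where V: "V \<in> obj T" "is_zero_obj T (susp T V)" using susp_zero_obj_exists by blast
  have W: "W \<in> obj T" using thom_objs[OF u] by blast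
  have X: "src T f \<in> obj T" using thom_objs[OF dtri_thom(1)[OF tri]] by blast
  have zVW: "mzero T V W \<in> thom T V W" using mzero_in_thom[OF V(1) W] .
  have idW: "idm T W \<in> thom T W W" using idm_in_thom[OF W] .
  have zW: "mzero T W (susp T V) \<in> thom T W (susp T V)" using mzero_in_thom[OF W susp_in_obj[OF V(1)]] .
  have "mneg T (suspm T (mzero T V W)) = mzero T (susp T V) (susp T W)"
    using thom_from_zero_obj[OF V(2) mneg_in_thom[OF suspm_in_thom[OF zVW]]] .
  moreover have "is_triangle T (mzero T V W, idm T W, mzero T W (susp T V))"
    unfolding is_triangle_def using V(1) W zVW idW zW by blast
  ultimately have tW: "(mzero T V W, idm T W, mzero T W (susp T V)) \<in> dtri T"
    using dtri_rotate_iff dtri_identity[OF W V(2)] by simp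
  have zXV: "mzero T (src T f) V \<in> thom T (src T f) V" using mzero_in_thom[OF X V(1)] .
  obtain c where "c \<in> thom T (tgt T g) W" "cmp T c g = cmp T (idm T W) u"
    using dtri_morphism_completion[OF tri tW, of "mzero T (src T f) V" u] zXV u uf mzero_cmp[OF zXV W] thom_memD[OF zVW]
      thom_memD[OF idW] by auto
  then show ?thesis using cmp_idm_left[OF u] by auto
qed

text \<open>A piece of the long exact \<open>Hom(-, \<Sigma>W)\<close>-sequence of \<open>X \<rightarrow> C\<^sub>0 \<rightarrow> X\<^sub>1 \<rightarrow> \<Sigma>X\<close>.\<close>
lemma dtri_thom_third_eq_mzero:
  assumes tri: "(f, g, h) \<in> dtri T" and W: "W \<in> obj T"
    and C0W: "thom T (tgt T f) (susp T W) = {mzero T (tgt T f) (susp T W)}"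
    and factor: "\<And>c. c \<in> thom T (src T f) W \<Longrightarrow> \<exists>k\<in>thom T (tgt T f) W. cmp T k f = c"
  shows "thom T (tgt T g) (susp T W) = {mzero T (tgt T g) (susp T W)}"
proof -
  let ?X = "src T f" and ?C0 = "tgt T f" and ?X1 = "tgt T g"
  have f: "f \<in> thom T ?X ?C0" and g: "g \<in> thom T ?C0 ?X1" and h: "h \<in> thom T ?X1 (susp T ?X)"
    using dtri_thom[OF tri] by auto
  have X: "?X \<in> obj T" and X1: "?X1 \<in> obj T" using thom_objs f g by auto
  have sf: "suspm T f \<in> thom T (susp T ?X) (susp T ?C0)" using suspm_in_thom[OF f] .
  have "cmp T (mneg T (suspm T f)) h = mzero T ?X1 (susp T ?C0)"
    using dtri_cmp_eq_mzero[OF dtri_rotate[OF dtri_rotate[OF tri]]]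
      thom_memD[OF h] thom_memD[OF mneg_in_thom[OF sf]] by simp
  then have sf_h: "cmp T (suspm T f) h = mzero T ?X1 (susp T ?C0)"
    using cmp_eq_mzero_if_cmp_mneg[OF sf h] by blast
  show ?thesis
  proof (rule thom_eq_singleton_mzero[OF X1 susp_in_obj[OF W]])
    fix v assume v: "v \<in> thom T ?X1 (susp T W)"
    have "cmp T v g = mzero T ?C0 (susp T W)" using C0W cmp_in_thom[OF g v] by blast
    then obtain c where c: "c \<in> thom T (susp T ?X) (susp T W)" "cmp T c h = v"
      using dtri_hom_exact[OF dtri_rotate[OF tri] v] thom_memD[OF g] thom_memD[OF h] by auto
    obtain c' where c': "c' \<in> thom T ?X W" "c = suspm T c'"
      using suspm_bij[OF X W] c(1) unfolding bij_betw_def by auto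
    obtain k where k: "k \<in> thom T ?C0 W" "cmp T k f = c'" using factor[OF c'(1)] by blast
    have "v = cmp T (cmp T (suspm T k) (suspm T f)) h"
      using c c' k suspm_cmp[OF f k(1)] by simp
    also have "\<dots> = cmp T (suspm T k) (cmp T (suspm T f) h)"
      using cmp_assoc[OF h sf suspm_in_thom[OF k(1)]] by simp
    also have "\<dots> = mzero T ?X1 (susp T W)"
      using sf_h cmp_mzero[OF suspm_in_thom[OF k(1)] X1] by simp
    finally show "v = mzero T ?X1 (susp T W)" .
  qed
qed

end

definition tri_relations :: "('o, 'm) tricat \<Rightarrow> ('o \<Rightarrow> int) set" where
  "tri_relations T = generate (free_ab (obj T)) (iso_rels T (obj T) \<union> tri_rels T)"

lemma iso_rels_subset_free_ab: "iso_rels T S \<subseteq> carrier (free_ab S)"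
proof
  fix r assume "r \<in> iso_rels T S"
  then obtain X Y where "r = (\<lambda>x. gen X x - gen Y x)" "X \<in> S" "Y \<in> S"
    unfolding iso_rels_def by blast
  then show "r \<in> carrier (free_ab S)"
    using free_ab_subgroup_diff[OF group.subgroup_self[OF group_free_ab]] gen_in_free_ab by metis
qed

context triangulated_category
begin

lemma tri_rels_subset_free_ab: "tri_rels T \<subseteq> carrier (free_ab (obj T))"
proof
  fix r assume "r \<in> tri_rels T"
  then obtain f g h where r: "r = (\<lambda>x. gen (src T f) x - gen (tgt T f) x + gen (tgt T g) x)"
    and tri: "(f, g, h) \<in> dtri T"
    unfolding tri_rels_def by blast
  have "src T f \<in> obj T" "tgt T f \<in> obj T" "tgt T g \<in> obj T"
    using thom_objs dtri_thom(1,2)[OF tri] by blast+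
  then show "r \<in> carrier (free_ab (obj T))"
    unfolding r using group.subgroup_self[OF group_free_ab] gen_in_free_ab
      free_ab_subgroup_add free_ab_subgroup_diff by metis
qed

lemma subgroup_tri_relations: "subgroup (tri_relations T) (free_ab (obj T))"
  unfolding tri_relations_def
  using group.generate_is_subgroup[OF group_free_ab] iso_rels_subset_free_ab tri_rels_subset_free_ab
  by (metis Un_subset_iff)

lemma dtri_relation_mem:
  assumes "(f, g, h) \<in> dtri T" "f \<in> thom T X Y" "g \<in> thom T Y Z"
  shows "(\<lambda>x. gen X x - gen Y x + gen Z x) \<in> tri_relations T"
proof -
  have "(\<lambda>x. gen X x - gen Y x + gen Z x) \<in> tri_rels T"
    unfolding tri_rels_def using assms thom_memD by blast
  then show ?thesis unfolding tri_relations_def by (blast intro: generate.incl)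
qed

end

section \<open>Resolutions by a cluster tilting subcategory\<close>

definition hom_vanishing :: "('o, 'm) tricat \<Rightarrow> 'o set \<Rightarrow> nat \<Rightarrow> 'o \<Rightarrow> bool" where
  "hom_vanishing T C m X \<longleftrightarrow> (\<forall>B\<in>C. \<forall>i. 1 \<le> i \<and> i \<le> m \<longrightarrow>
      thom T X ((susp T ^^ i) B) = {mzero T X ((susp T ^^ i) B)})"

lemma hom_vanishingD:
  "hom_vanishing T C m X \<Longrightarrow> B \<in> C \<Longrightarrow> 1 \<le> i \<Longrightarrow> i \<le> m \<Longrightarrow>
    thom T X ((susp T ^^ i) B) = {mzero T X ((susp T ^^ i) B)}"
  unfolding hom_vanishing_def by blast

locale cluster_tilting_subcategory = triangulated_category +
  fixes t :: nat and C :: "'o set"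
  assumes cluster_tilting: "cluster_tilting t T C"
begin

lemma subset_obj: "C \<subseteq> obj T"
  using cluster_tilting unfolding cluster_tilting_def functorially_finite_def by blast

lemma left_approx_exists: "X \<in> obj T \<Longrightarrow> \<exists>f. left_approx T C X f"
  using cluster_tilting unfolding cluster_tilting_def functorially_finite_def by blast

lemma mem_iff_hom_vanishing: "X \<in> C \<longleftrightarrow> X \<in> obj T \<and> hom_vanishing T C (t - 1) X"
proof -
  have "C = {A\<in>obj T. \<forall>i. 1 \<le> i \<and> i \<le> t - 1 \<longrightarrow> (\<forall>B\<in>C.
            thom T A ((susp T ^^ i) B) = {mzero T A ((susp T ^^ i) B)})}"
    using cluster_tilting unfolding cluster_tilting_def by blast
  then show ?thesis unfolding hom_vanishing_def by blast
qed

lemma left_approx_triangle: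
  assumes X: "X \<in> obj T"
  obtains C0 X1 where "C0 \<in> C" "X1 \<in> obj T" "(\<lambda>x. gen X x - gen C0 x + gen X1 x) \<in> tri_rels T"
    "\<And>m. m < t - 1 \<Longrightarrow> hom_vanishing T C m X \<Longrightarrow> hom_vanishing T C (Suc m) X1"
proof -
  obtain f where la: "left_approx T C X f" using left_approx_exists[OF X] by blast
  have C0: "tgt T f \<in> C" and f: "f \<in> thom T X (tgt T f)" using la unfolding left_approx_def by auto
  obtain g h where tri: "(f, g, h) \<in> dtri T" using dtri_exists thom_memD[OF f] by blast
  have srcf: "src T f = X" using thom_memD[OF f] by blast
  have "tgt T g \<in> obj T" using thom_objs[OF dtri_thom(2)[OF tri]] by blast
  moreover have "(\<lambda>x. gen X x - gen (tgt T f) x + gen (tgt T g) x) \<in> tri_rels T"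
    unfolding tri_rels_def using tri srcf by blast
  moreover have "hom_vanishing T C (Suc m) (tgt T g)"
    if m: "m < t - 1" and van: "hom_vanishing T C m X" for m
    unfolding hom_vanishing_def
  proof (intro ballI allI impI)
    fix B i assume B: "B \<in> C" and i: "1 \<le> i \<and> i \<le> Suc m"
    then obtain j where ij: "i = Suc j" by (cases i) auto
    let ?W = "(susp T ^^ j) B"
    have W: "?W \<in> obj T" using susp_pow_in_obj B subset_obj by blast
    have "hom_vanishing T C (t - 1) (tgt T f)" using C0 mem_iff_hom_vanishing by blast
    then have "thom T (tgt T f) (susp T ?W) = {mzero T (tgt T f) (susp T ?W)}"
      using hom_vanishingD[OF _ B, of T _ "tgt T f" i] i m ij by simp
    moreover have "\<exists>k\<in>thom T (tgt T f) ?W. cmp T k f = c" if c: "c \<in> thom T X ?W" for c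
    proof (cases j)
      case 0
      then show ?thesis using la B c unfolding left_approx_def by simp
    next
      case (Suc j')
      then have "c = mzero T X ?W" using hom_vanishingD[OF van B, of j] c i ij by simp
      then show ?thesis
        using mzero_cmp[OF f W] mzero_in_thom[OF _ W] thom_objs[OF f] by (intro bexI) auto
    qed
    ultimately show "thom T (tgt T g) ((susp T ^^ i) B) = {mzero T (tgt T g) ((susp T ^^ i) B)}"
      using dtri_thom_third_eq_mzero[OF tri W] srcf ij by simp
  qed
  ultimately show thesis using that C0 by blast
qed

lemma gen_congruent_mod_tri_relations:
  assumes X: "X \<in> obj T"
  shows "\<exists>d\<in>carrier (free_ab C). (\<lambda>x. gen X x - d x) \<in> tri_relations T"
proof -
  note H = subgroup_tri_relations
  have rel: "r \<in> tri_relations T" if "r \<in> tri_rels T" for r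
    using that unfolding tri_relations_def by (blast intro: generate.incl)
  \<comment> \<open>induction on the number of resolution steps still needed to reach \<open>C\<close>\<close>
  have "\<exists>d\<in>carrier (free_ab C). (\<lambda>x. gen Y x - d x) \<in> tri_relations T"
    if "j \<le> t - 1" "Y \<in> obj T" "hom_vanishing T C (t - 1 - j) Y" for j Y
    using that
  proof (induction j arbitrary: Y)
    case 0
    then have "Y \<in> C" using mem_iff_hom_vanishing by simp
    then show ?case
      using gen_in_free_ab subgroup.one_closed[OF H] by (intro bexI[of _ "gen Y"]) auto
  next
    case (Suc j)
    obtain C0 Y1 where C0: "C0 \<in> C" and Y1: "Y1 \<in> obj T"
      and tri: "(\<lambda>x. gen Y x - gen C0 x + gen Y1 x) \<in> tri_rels T"
      and van: "\<And>m. m < t - 1 \<Longrightarrow> hom_vanishing T C m Y \<Longrightarrow> hom_vanishing T C (Suc m) Y1"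
      using left_approx_triangle[OF Suc.prems(2)] by blast
    have "hom_vanishing T C (t - 1 - j) Y1"
      using van[OF _ Suc.prems(3)] Suc.prems(1) Suc_diff_Suc by fastforce
    then obtain d1 where d1: "d1 \<in> carrier (free_ab C)" "(\<lambda>x. gen Y1 x - d1 x) \<in> tri_relations T"
      using Suc.IH Suc.prems(1) Y1 by auto
    have "(\<lambda>x. (gen Y x - gen C0 x + gen Y1 x) - (gen Y1 x - d1 x)) \<in> tri_relations T"
      using free_ab_subgroup_diff[OF H rel[OF tri] d1(2)] by simp
    moreover have "(\<lambda>x. gen C0 x - d1 x) \<in> carrier (free_ab C)"
      using free_ab_add_closed[OF gen_in_free_ab[OF C0] free_ab_neg_closed[OF d1(1)]] by simp
    ultimately show ?case
      by (intro bexI[of _ "\<lambda>x. gen C0 x - d1 x"]) (simp_all add: algebra_simps)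
  qed
  moreover have "hom_vanishing T C 0 X" unfolding hom_vanishing_def by auto
  ultimately show ?thesis using X by fastforce
qed

end

section \<open>\<open>n\<close>-angles\<close>

text \<open>The alternating sum of an \<open>n\<close>-angle telescopes along the triangles defining it.\<close>
lemma free_ab_subgroup_alternating_sum:
  assumes H: "subgroup H (free_ab S)" and n: "n \<ge> 4"
    and first: "(\<lambda>x. gen (A 1) x - gen (A 2) x + gen (X 1) x) \<in> H"
    and middle: "\<And>i. 2 \<le> i \<Longrightarrow> i \<le> n - 3 \<Longrightarrow> (\<lambda>x. gen (X (i - 1)) x - gen (A (i + 1)) x + gen (X i) x) \<in> H"
    and last: "(\<lambda>x. gen (X (n - 3)) x - gen (A (n - 1)) x + gen (A n) x) \<in> H"
  shows "(\<lambda>x. \<Sum>i=1..n. (-1) ^ (i + 1) * gen (A i) x) \<in> H"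
proof -
  obtain m where m: "n = m + 4" using n by (metis add.commute le_Suc_ex)
  define partial where "partial k = (\<lambda>x. (\<Sum>i=1..k+1. (-1) ^ (i + 1) * gen (A i) x) + (-1) ^ (k + 1) * gen (X k) x)"
    for k
  have "partial k \<in> H" if "1 \<le> k" "k \<le> n - 3" for k
    using that
  proof (induction k)
    case 0
    then show ?case by simp
  next
    case (Suc k)
    show ?case
    proof (cases "k = 0")
      case True
      then show ?thesis using first by (simp add: partial_def numeral_2_eq_2)
    next
      case False
      have "(\<lambda>x. (-1) ^ k * (gen (X k) x - gen (A (k + 2)) x + gen (X (Suc k)) x)) \<in> H"
        using free_ab_subgroup_smult[OF H middle[of "Suc k"]] Suc.prems False by simp
      then have "(\<lambda>x. partial k x + (-1) ^ k * (gen (X k) x - gen (A (k + 2)) x + gen (X (Suc k)) x)) \<in> H"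
        using free_ab_subgroup_add[OF H Suc.IH] Suc.prems False by simp
      moreover have "(\<lambda>x. partial k x + (-1) ^ k * (gen (X k) x - gen (A (k + 2)) x + gen (X (Suc k)) x))
          = partial (Suc k)"
        unfolding partial_def by (rule ext) (simp add: algebra_simps)
      ultimately show ?thesis by simp
    qed
  qed
  then have "(\<lambda>x. partial (m + 1) x + (-1) ^ (m + 3) * (gen (X (m + 1)) x - gen (A (m + 3)) x + gen (A (m + 4)) x)) \<in> H"
    using free_ab_subgroup_add[OF H _ free_ab_subgroup_smult[OF H last]] m
    by (simp add: numeral_eq_Suc del: power_Suc)
  moreover have "(\<lambda>x. partial (m + 1) x + (-1) ^ (m + 3) * (gen (X (m + 1)) x - gen (A (m + 3)) x + gen (A (m + 4)) x))
      = (\<lambda>x. \<Sum>i=1..n. (-1) ^ (i + 1) * gen (A i) x)"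
    unfolding partial_def by (rule ext) (simp add: m numeral_eq_Suc algebra_simps)
  ultimately show ?thesis by simp
qed

definition angle_relations :: "nat \<Rightarrow> ('o, 'm) tricat \<Rightarrow> 'o set \<Rightarrow> ('o \<Rightarrow> int) set" where
  "angle_relations n T C = generate (free_ab C) (iso_rels T C \<union> angle_rels n T C)"

lemma angle_rels_subset_free_ab: "angle_rels n T C \<subseteq> carrier (free_ab C)"
proof
  note F = group.subgroup_self[OF group_free_ab, of C]
  fix r assume "r \<in> angle_rels n T C"
  then consider (angle) A \<alpha> where "r = (\<lambda>x. \<Sum>i=1..n. (-1) ^ (i + 1) * gen (A i) x)" "is_n_angle n T C A \<alpha>"
    | (zero) Z where "r = gen Z" "Z \<in> C"
    unfolding angle_rels_def by (auto split: if_splits)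
  then show "r \<in> carrier (free_ab C)"
  proof cases
    case angle
    have "A i \<in> C" if "i \<in> {1..n}" for i using angle(2) that unfolding is_n_angle_def by auto
    then have "(\<lambda>x. (-1) ^ (i + 1) * gen (A i) x) \<in> carrier (free_ab C)" if "i \<in> {1..n}" for i
      using that free_ab_subgroup_smult[OF F gen_in_free_ab] by blast
    then show ?thesis
      unfolding angle(1) by (intro free_ab_subgroup_sum[OF F]) simp_all
  next
    case zero
    then show ?thesis using gen_in_free_ab by simp
  qed
qed

lemma subgroup_angle_relations: "subgroup (angle_relations n T C) (free_ab C)"
  unfolding angle_relations_def
  using group.generate_is_subgroup[OF group_free_ab] iso_rels_subset_free_ab angle_rels_subset_free_ab
  by (metis Un_subset_iff)

context triangulated_category
begin

lemma n_angle_relation_mem: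
  assumes n: "n \<ge> 4" and angle: "is_n_angle n T C A \<alpha>"
  shows "(\<lambda>x. \<Sum>i=1..n. (-1) ^ (i + 1) * gen (A i) x) \<in> tri_relations T"
proof -
  from angle obtain X f g d where
    \<alpha>: "\<And>i. 1 \<le> i \<Longrightarrow> i \<le> n - 1 \<Longrightarrow> \<alpha> i \<in> thom T (A i) (A (i + 1))" and
    fg: "\<And>i. 1 \<le> i \<Longrightarrow> i \<le> n - 3 \<Longrightarrow> f i \<in> thom T (A (i + 1)) (X i) \<and> g i \<in> thom T (X i) (A (i + 2))" and
    first: "(\<alpha> 1, f 1, d (n - 2)) \<in> dtri T" and
    middle: "\<And>i. 2 \<le> i \<Longrightarrow> i \<le> n - 3 \<Longrightarrow> (g (i - 1), f i, d (n - 1 - i)) \<in> dtri T" and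
    last: "(g (n - 3), \<alpha> (n - 1), d 1) \<in> dtri T"
    unfolding is_n_angle_def by blast
  show ?thesis
  proof (rule free_ab_subgroup_alternating_sum[OF subgroup_tri_relations n])
    show "(\<lambda>x. gen (A 1) x - gen (A 2) x + gen (X 1) x) \<in> tri_relations T"
      using dtri_relation_mem[OF first] \<alpha>[of 1] fg[of 1] n by (simp add: numeral_2_eq_2)
    show "(\<lambda>x. gen (X (i - 1)) x - gen (A (i + 1)) x + gen (X i) x) \<in> tri_relations T"
      if "2 \<le> i" "i \<le> n - 3" for i
      using dtri_relation_mem[OF middle[OF that]] fg[of "i - 1"] fg[of i] that by simp
    show "(\<lambda>x. gen (X (n - 3)) x - gen (A (n - 1)) x + gen (A n) x) \<in> tri_relations T"
    proof -
      obtain m where m: "n = m + 4" using n by (metis add.commute le_Suc_ex)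
      show ?thesis using dtri_relation_mem[OF last] fg[of "m + 1"] \<alpha>[of "m + 3"] by (simp add: m eval_nat_numeral)
    qed
  qed
qed

lemma angle_relations_subset_tri_relations:
  assumes C: "C \<subseteq> obj T" and n: "n \<ge> 4"
  shows "angle_relations n T C \<subseteq> tri_relations T"
  unfolding angle_relations_def
proof (rule generate_free_ab_subset[OF C _ subgroup_tri_relations])
  show "iso_rels T C \<union> angle_rels n T C \<subseteq> carrier (free_ab C)"
    using iso_rels_subset_free_ab angle_rels_subset_free_ab by blast
  have "iso_rels T C \<subseteq> tri_relations T"
    using C unfolding iso_rels_def tri_relations_def by (blast intro: generate.incl)
  moreover have "gen Z \<in> tri_relations T" if "is_zero_obj T Z" for Z
  proof -
    have Z: "Z \<in> obj T" using zero_obj_in_obj[OF that] .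
    have "(\<lambda>x. gen Z x - gen Z x + gen Z x) \<in> tri_relations T"
      using dtri_relation_mem[OF dtri_identity[OF Z that]] idm_in_thom[OF Z] mzero_in_thom[OF Z Z] by blast
    then show ?thesis by simp
  qed
  ultimately show "iso_rels T C \<union> angle_rels n T C \<subseteq> tri_relations T"
    using n_angle_relation_mem[OF n] unfolding angle_rels_def by auto
qed

end

theorem theorem3p1:
  fixes T :: "('o,'m) tricat" and C :: "'o set" and n :: nat
  assumes "is_triangulated T"
    and "n \<ge> 4"
    and "cluster_tilting (n - 2) T C"
    and "\<forall>A\<in>C. (susp T ^^ (n - 2)) A \<in> C"
  shows "\<exists>\<phi>. \<phi> \<in> hom (K0_ang n T C) (K0_tri T) \<and>
           \<phi> ` carrier (K0_ang n T C) = carrier (K0_tri T) \<and>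
           (\<forall>A\<in>C. \<forall>B\<in>C.
              \<phi> (cls_ang n T C A \<otimes>\<^bsub>K0_ang n T C\<^esub> inv\<^bsub>K0_ang n T C\<^esub> cls_ang n T C B)
                = cls_tri T A \<otimes>\<^bsub>K0_tri T\<^esub> inv\<^bsub>K0_tri T\<^esub> cls_tri T B)"
proof -
  \<comment> \<open>closure of \<open>C\<close> under \<open>\<Sigma>\<^bsup>n-2\<^esup>\<close> only makes \<open>C\<close> \<open>n\<close>-angulated; the map does not need it\<close>
  interpret cluster_tilting_subcategory T "n - 2" C
    using assms(1,3) by unfold_locales
  note HC = subgroup_angle_relations[of n T C] and HT = subgroup_tri_relations
  obtain \<phi> where \<phi>: "\<phi> \<in> hom (free_ab C Mod angle_relations n T C) (free_ab (obj T) Mod tri_relations T)"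
    and \<phi>_rcos: "\<And>c. c \<in> carrier (free_ab C) \<Longrightarrow>
      \<phi> (angle_relations n T C #>\<^bsub>free_ab C\<^esub> c) = tri_relations T #>\<^bsub>free_ab (obj T)\<^esub> c"
    using free_ab_Mod_induced_hom[OF subset_obj HC HT angle_relations_subset_tri_relations[OF subset_obj assms(2)]]
    by blast
  have onto: "\<phi> ` carrier (free_ab C Mod angle_relations n T C) = carrier (free_ab (obj T) Mod tri_relations T)"
    by (rule free_ab_Mod_induced_hom_onto[OF subset_obj HT \<phi> \<phi>_rcos
      free_ab_congruent_if_generators[OF HT gen_congruent_mod_tri_relations]])
  show ?thesis
    unfolding K0_ang_def K0_tri_def cls_ang_def cls_tri_def
      angle_relations_def[symmetric] tri_relations_def[symmetric]
  proof (intro exI[of _ \<phi>] conjI ballI \<phi> onto)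
    fix A B assume "A \<in> C" "B \<in> C"
    then show "\<phi> ((angle_relations n T C #>\<^bsub>free_ab C\<^esub> gen A) \<otimes>\<^bsub>free_ab C Mod angle_relations n T C\<^esub>
        inv\<^bsub>free_ab C Mod angle_relations n T C\<^esub> (angle_relations n T C #>\<^bsub>free_ab C\<^esub> gen B))
      = (tri_relations T #>\<^bsub>free_ab (obj T)\<^esub> gen A) \<otimes>\<^bsub>free_ab (obj T) Mod tri_relations T\<^esub>
        inv\<^bsub>free_ab (obj T) Mod tri_relations T\<^esub> (tri_relations T #>\<^bsub>free_ab (obj T)\<^esub> gen B)"
      by (intro free_ab_Mod_induced_hom_diff[OF subset_obj HC HT \<phi>_rcos] gen_in_free_ab)
  qed
qed

end
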